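(* Let $d \ge 1$ be an integer and let $k > 0$. Suppose a random vector $\boldsymbol{w} = (w_1,\ldots,w_d) \in \mathbb{R}^d$ is drawn from a $d$-variate spherically symmetric distribution $\mathcal{D}$. Then for any fixed $\boldsymbol{x}, \boldsymbol{y} \in \mathbb{R}^d$, $$\left|\sum_{i=1}^d w_i x_i - \sum_{i=1}^d w_i y_i\right| \geq k \sum_{i=1}^d |x_i - y_i|$$ holds with probability at least $P_{\boldsymbol{\gamma} \sim \mathcal{D}}\left(|\gamma_1| \geq k\sqrt{d}\right)$, where $\gamma_1$ denotes the first coordinate of $\boldsymbol{\gamma}$.
   Context: A probability distribution $\mathcal{D}$ on $\mathbb{R}^d$ is spherically symmetric if for every $d \times d$ orthogonal matrix $Q$, whenever $\boldsymbol{w} \sim \mathcal{D}$, the vector $Q\boldsymbol{w}$ also has distribution $\mathcal{D}$. *)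

theory Defs
  imports "HOL-Analysis.Analysis" "HOL-Probability.Probability"
begin

definition spherically_symmetric :: "(real ^ 'n) measure \<Rightarrow> bool" where
  "spherically_symmetric D \<longleftrightarrow>
     (\<forall>Q :: real ^ 'n ^ 'n. orthogonal_matrix Q \<longrightarrow> distr D D (\<lambda>w. Q *v w) = D)"

end

theory Submission
  imports Defs
begin

text \<open>Rotating the unit vector \<open>u = (x - y) / \<parallel>x - y\<parallel>\<close> onto the \<open>i\<close>-th axis shows that under a
  spherically symmetric \<open>D\<close> the projection \<open>w \<bullet> u\<close> has the same law as the coordinate \<open>w $ i\<close>.
  So \<open>\<bar>w \<bullet> (x - y)\<bar> \<ge> k \<surd>d \<parallel>x - y\<parallel>\<close> has probability \<open>P(\<bar>\<gamma>\<^sub>i\<bar> \<ge> k \<surd>d)\<close>, and by Cauchy-Schwarz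
  \<open>\<surd>d \<parallel>x - y\<parallel>\<close> dominates the \<open>\<ell>\<^sub>1\<close>-norm of \<open>x - y\<close>.\<close>

lemma sum_abs_le_sqrt_card_mul_norm:
  fixes v :: "real ^ 'n"
  shows "(\<Sum>i\<in>UNIV. \<bar>v $ i\<bar>) \<le> sqrt (real CARD('n)) * norm v"
proof -
  define a :: "real ^ 'n" where "a = (\<chi> i. \<bar>v $ i\<bar>)"
  define e :: "real ^ 'n" where "e = (\<chi> i. 1)"
  have "(\<Sum>i\<in>UNIV. \<bar>v $ i\<bar>) = a \<bullet> e" by (simp add: a_def e_def inner_vec_def)
  also have "\<dots> \<le> norm a * norm e" by (rule norm_cauchy_schwarz)
  also have "norm a = norm v" by (simp add: a_def norm_vec_def L2_set_def)
  also have "norm e = sqrt (real CARD('n))" by (simp add: e_def norm_vec_def L2_set_def)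
  finally show ?thesis by (simp add: mult.commute)
qed

lemma orthogonal_matrix_with_row:
  fixes u :: "real ^ 'n"
  assumes "norm u = 1"
  obtains Q :: "real ^ 'n ^ 'n" where "orthogonal_matrix Q" "\<And>w. (Q *v w) $ i = w \<bullet> u"
proof -
  obtain f :: "real ^ 'n \<Rightarrow> real ^ 'n" where f: "orthogonal_transformation f" "f u = axis i 1"
    using orthogonal_transformation_exists[of u "axis i 1"] assms by auto
  have "linear f" using f(1) by (simp add: orthogonal_transformation)
  then have "(matrix f *v w) $ i = f w \<bullet> f u" for w by (simp add: matrix_works f(2) inner_axis)
  also have "f w \<bullet> f u = w \<bullet> u" for w using f(1) by (simp add: orthogonal_transformation_def)
  finally show ?thesis using that orthogonal_transformation_matrix f(1) by blast
qed

lemma spherically_symmetric_distr_inner_unit: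
  fixes D :: "(real ^ 'n) measure"
  assumes "sets D = sets borel" "spherically_symmetric D" "norm u = 1"
  shows "distr D borel (\<lambda>w. w \<bullet> u) = distr D borel (\<lambda>w. w $ i)"
proof -
  obtain Q where Q: "orthogonal_matrix Q" "\<And>w. (Q *v w) $ i = w \<bullet> u"
    using orthogonal_matrix_with_row[OF assms(3)] by blast
  have rotation: "(\<lambda>w. Q *v w) \<in> measurable D D"
    using measurable_cong_sets[OF assms(1) assms(1)]
    by (simp add: linear_continuous_on matrix_vector_mul_linear borel_measurable_continuous_onI)
  have coordinate: "(\<lambda>w. w $ i) \<in> borel_measurable D"
    unfolding measurable_cong_sets[OF assms(1) refl]
    by (intro borel_measurable_continuous_onI continuous_intros)
  have "distr D borel (\<lambda>w. w $ i) = distr (distr D D (\<lambda>w. Q *v w)) borel (\<lambda>w. w $ i)"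
    using assms(2) Q(1) unfolding spherically_symmetric_def by simp
  also have "\<dots> = distr D borel ((\<lambda>w. w $ i) \<circ> (\<lambda>w. Q *v w))"
    by (rule distr_distr[OF coordinate rotation])
  finally show ?thesis by (simp add: comp_def Q(2))
qed

lemma spherically_symmetric_measure_inner_unit:
  fixes D :: "(real ^ 'n) measure"
  assumes "sets D = sets borel" "spherically_symmetric D" "norm u = 1" "S \<in> sets borel"
  shows "measure D {w. w \<bullet> u \<in> S} = measure D {w. w $ i \<in> S}"
proof -
  have space: "space D = UNIV" using sets_eq_imp_space_eq[OF assms(1)] by simp
  have "f \<in> borel_measurable D \<Longrightarrow> measure D {w. f w \<in> S} = measure (distr D borel f) S"
    for f :: "real ^ 'n \<Rightarrow> real"
    using measure_distr[of f D borel S] assms(4) space by (simp add: vimage_def)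
  moreover have "(\<lambda>w. w \<bullet> u) \<in> borel_measurable D" "(\<lambda>w. w $ i) \<in> borel_measurable D"
    unfolding measurable_cong_sets[OF assms(1) refl]
    by (intro borel_measurable_continuous_onI continuous_intros)+
  ultimately show ?thesis
    using spherically_symmetric_distr_inner_unit[OF assms(1-3), of i] by simp
qed

lemma l1_bound_from_unit_direction:
  fixes v w :: "real ^ 'n"
  assumes "v \<noteq> 0" "k \<ge> 0" "k * sqrt (real CARD('n)) \<le> \<bar>w \<bullet> (v /\<^sub>R norm v)\<bar>"
  shows "k * (\<Sum>i\<in>UNIV. \<bar>v $ i\<bar>) \<le> \<bar>w \<bullet> v\<bar>"
proof -
  have "k * (\<Sum>i\<in>UNIV. \<bar>v $ i\<bar>) \<le> k * sqrt (real CARD('n)) * norm v"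
    using sum_abs_le_sqrt_card_mul_norm[of v] assms(2) by (metis mult.assoc mult_left_mono)
  also have "\<dots> \<le> \<bar>w \<bullet> (v /\<^sub>R norm v)\<bar> * norm v"
    using assms(3) by (simp add: mult_right_mono)
  also have "\<dots> = \<bar>w \<bullet> v\<bar>" using assms(1) by (simp add: abs_mult)
  finally show ?thesis .
qed

theorem theorem1:
  fixes D :: "(real ^ 'n) measure"
    and k :: real
    and x y :: "real ^ 'n"
    and i1 :: 'n
  assumes "prob_space D"
    and "sets D = sets borel"
    and "spherically_symmetric D"
    and "k > 0"
  shows "measure D {w. \<bar>(\<Sum>i\<in>UNIV. w $ i * x $ i) - (\<Sum>i\<in>UNIV. w $ i * y $ i)\<bar>
                        \<ge> k * (\<Sum>i\<in>UNIV. \<bar>x $ i - y $ i\<bar>)}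
         \<ge> measure D {g. \<bar>g $ i1\<bar> \<ge> k * sqrt (real CARD('n))}"
proof -
  interpret prob_space D by fact
  define v where "v = x - y"
  define c where "c = k * sqrt (real CARD('n))"
  let ?T = "{w. k * (\<Sum>i\<in>UNIV. \<bar>v $ i\<bar>) \<le> \<bar>w \<bullet> v\<bar>}"
  have "{w. \<bar>(\<Sum>i\<in>UNIV. w $ i * x $ i) - (\<Sum>i\<in>UNIV. w $ i * y $ i)\<bar>
            \<ge> k * (\<Sum>i\<in>UNIV. \<bar>x $ i - y $ i\<bar>)} = ?T"
    by (simp add: v_def inner_vec_def sum_subtractf[symmetric] algebra_simps)
  moreover have T_sets: "?T \<in> sets D"
    unfolding assms(2) by (intro borel_closed closed_Collect_le continuous_intros)
  moreover have "measure D {g. c \<le> \<bar>g $ i1\<bar>} \<le> measure D ?T"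
  proof (cases "v = 0")
    case True
    then have "?T = space D" using sets_eq_imp_space_eq[OF assms(2)] by simp
    then show ?thesis using prob_le_1 prob_space by simp
  next
    case False
    have "norm (v /\<^sub>R norm v) = 1" using False by simp
    moreover have "{t :: real. c \<le> \<bar>t\<bar>} \<in> sets borel"
      by (intro borel_closed closed_Collect_le continuous_intros)
    ultimately have "measure D {g. c \<le> \<bar>g $ i1\<bar>} = measure D {w. c \<le> \<bar>w \<bullet> (v /\<^sub>R norm v)\<bar>}"
      using spherically_symmetric_measure_inner_unit[OF assms(2,3), of "v /\<^sub>R norm v" "{t. c \<le> \<bar>t\<bar>}" i1]
      by (simp only: mem_Collect_eq)
    also have "\<dots> \<le> measure D ?T"
      using l1_bound_from_unit_direction[OF False] assms(4) T_sets unfolding c_def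
      by (intro finite_measure_mono) auto
    finally show ?thesis .
  qed
  ultimately show ?thesis unfolding c_def by simp
qed

end
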